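(* Let $p$ be a design of a random treatment vector $\mathbf Z\in\{0,1\}^n$ and suppose each unit $i$ has potential outcomes of the form $Y_i(z,e)=A_i(z)+B_i(e)+zC_i(e)$, $z\in\{0,1\}$, $e\in\{0,\dots,K_i-1\}$ (with $K_i\ge2$), where $B_i(0)=C_i(0)=0$. Define $$\hat\beta_1=\frac{\sum_i Y_i^{obs}I(Z_i=1,E_i=0)}{\sum_iI(Z_i=1,E_i=0)}-\frac{\sum_i Y_i^{obs}I(Z_i=0,E_i=0)}{\sum_iI(Z_i=0,E_i=0)},\quad \hat\beta_2=\frac{\sum_i Y_i^{obs}I(Z_i=1,E_i=1)}{\sum_iI(Z_i=1,E_i=1)}-\frac{\sum_i Y_i^{obs}I(Z_i=0,E_i=0)}{\sum_iI(Z_i=0,E_i=0)},$$ and assume the design makes the denominators appearing in each estimator positive with probability one. Then $$\mathbb E[\hat\beta_1]=\sum_{i=1}^n\big(A_i(1)\beta_i(1,0)-A_i(0)\beta_i(0,0)\big),$$ $$\mathbb E[\hat\beta_2]=\sum_{i=1}^n\big(A_i(1)\beta_i(1,1)-A_i(0)\beta_i(0,0)\big)+\sum_{i=1}^nB_i(1)\beta_i(1,1)+\sum_{i=1}^nC_i(1)\beta_i(1,1),$$ where $\beta_i(z,e)=\mathbb E\!\left[\frac{I(Z_i=z,E_i=e)}{\sum_jI(Z_j=z,E_j=e)}\right]$.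
   Context: Each unit $i$ has an interference neighborhood $N_i$ and exposure function $f$ mapping $\{0,1\}^{N_i}$ onto $\{0,\dots,K_i-1\}$, with random exposure $E_i=f(\mathbf Z_{N_i})$; level $0$ means not exposed and level $1$ means exposed. Observed outcome $Y_i^{obs}=Y_i(Z_i,E_i)$; expectations are over the design. *)

theory Defs
  imports "HOL-Probability.Probability"
begin

text \<open>Units are the elements of a finite type 'u (so n = CARD('u)); a treatment
  vector is Z :: 'u \<Rightarrow> bool (True = treated); a design is a pmf over treatment
  vectors.\<close>

definition ind :: "('u \<Rightarrow> ('u \<Rightarrow> bool) \<Rightarrow> nat) \<Rightarrow> 'u \<Rightarrow> bool \<Rightarrow> nat \<Rightarrow> ('u \<Rightarrow> bool) \<Rightarrow> real" where
  "ind E i z e Z = (if Z i = z \<and> E i Z = e then 1 else 0)"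

definition Yobs :: "('u \<Rightarrow> bool \<Rightarrow> nat \<Rightarrow> real) \<Rightarrow> ('u \<Rightarrow> ('u \<Rightarrow> bool) \<Rightarrow> nat) \<Rightarrow> 'u \<Rightarrow> ('u \<Rightarrow> bool) \<Rightarrow> real" where
  "Yobs Y E i Z = Y i (Z i) (E i Z)"

definition cell_mean :: "('u::finite \<Rightarrow> bool \<Rightarrow> nat \<Rightarrow> real) \<Rightarrow> ('u \<Rightarrow> ('u \<Rightarrow> bool) \<Rightarrow> nat) \<Rightarrow> bool \<Rightarrow> nat \<Rightarrow> ('u \<Rightarrow> bool) \<Rightarrow> real" where
  "cell_mean Y E z e Z = (\<Sum>i\<in>UNIV. Yobs Y E i Z * ind E i z e Z) / (\<Sum>i\<in>UNIV. ind E i z e Z)"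

definition beta_hat1 where
  "beta_hat1 Y E Z = cell_mean Y E True 0 Z - cell_mean Y E False 0 Z"

definition beta_hat2 where
  "beta_hat2 Y E Z = cell_mean Y E True 1 Z - cell_mean Y E False 0 Z"

definition beta_w :: "('u::finite \<Rightarrow> bool) pmf \<Rightarrow> ('u \<Rightarrow> ('u \<Rightarrow> bool) \<Rightarrow> nat) \<Rightarrow> 'u \<Rightarrow> bool \<Rightarrow> nat \<Rightarrow> real" where
  "beta_w p E i z e = measure_pmf.expectation p (\<lambda>Z. ind E i z e Z / (\<Sum>j\<in>UNIV. ind E j z e Z))"

end

theory Submission
  imports Defs
begin

text \<open>On the cell (z,e) the observed outcome of unit i is its potential outcome Y i z e, so
  each Hajek cell mean is the linear combination of the Y i z e with the random weights
  ind E i z e Z / (\<Sum>j. ind E j z e Z). Linearity of expectation turns these weights into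
  beta_w p E i z e, and the outcome model with B i 0 = C i 0 = 0 evaluates Y i z 0 and
  Y i True 1. The identity holds pointwise even for an empty cell, where both sides are 0
  (x / 0 = 0).\<close>

lemma cell_mean_eq_weighted_sum:
  fixes Y :: "'u::finite \<Rightarrow> bool \<Rightarrow> nat \<Rightarrow> real"
  shows "cell_mean Y E z e Z = (\<Sum>i\<in>UNIV. Y i z e * (ind E i z e Z / (\<Sum>j\<in>UNIV. ind E j z e Z)))"
  unfolding cell_mean_def sum_divide_distrib
  by (rule sum.cong) (auto simp: ind_def Yobs_def)

lemma integrable_pmf_finite_type:
  fixes p :: "'a::finite pmf" and f :: "'a \<Rightarrow> real"
  shows "integrable (measure_pmf p) f"
  by (rule integrable_measure_pmf_finite) simp

lemma expectation_cell_mean: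
  fixes Y :: "'u::finite \<Rightarrow> bool \<Rightarrow> nat \<Rightarrow> real" and p :: "('u \<Rightarrow> bool) pmf"
  shows "measure_pmf.expectation p (cell_mean Y E z e) = (\<Sum>i\<in>UNIV. Y i z e * beta_w p E i z e)"
  unfolding cell_mean_eq_weighted_sum beta_w_def
  by (simp add: Bochner_Integration.integral_sum integrable_pmf_finite_type del: times_divide_eq_right)

lemma expectation_cell_mean_diff:
  fixes Y :: "'u::finite \<Rightarrow> bool \<Rightarrow> nat \<Rightarrow> real" and p :: "('u \<Rightarrow> bool) pmf"
  shows "measure_pmf.expectation p (\<lambda>Z. cell_mean Y E z e Z - cell_mean Y E z' e' Z)
    = (\<Sum>i\<in>UNIV. Y i z e * beta_w p E i z e - Y i z' e' * beta_w p E i z' e')"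
  by (simp add: Bochner_Integration.integral_diff integrable_pmf_finite_type
      expectation_cell_mean sum_subtractf)

theorem proposition11:
  fixes p :: "('u::finite \<Rightarrow> bool) pmf"
    and N :: "'u \<Rightarrow> 'u set"
    and E :: "'u \<Rightarrow> ('u \<Rightarrow> bool) \<Rightarrow> nat"
    and K :: "'u \<Rightarrow> nat"
    and A :: "'u \<Rightarrow> bool \<Rightarrow> real"
    and B C :: "'u \<Rightarrow> nat \<Rightarrow> real"
    and Y :: "'u \<Rightarrow> bool \<Rightarrow> nat \<Rightarrow> real"
  assumes K2: "\<And>i. K i \<ge> 2"
    and E_local: "\<And>i Z Z'. (\<forall>j\<in>N i. Z j = Z' j) \<Longrightarrow> E i Z = E i Z'"
    and E_onto: "\<And>i. range (E i) = {0..<K i}"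
    and Y_form: "\<And>i z e. e < K i \<Longrightarrow> Y i z e = A i z + B i e + (if z then C i e else 0)"
    and B0: "\<And>i. B i 0 = 0"
    and C0: "\<And>i. C i 0 = 0"
  shows "((AE Z in measure_pmf p. (\<Sum>i\<in>UNIV. ind E i True 0 Z) > 0 \<and> (\<Sum>i\<in>UNIV. ind E i False 0 Z) > 0) \<longrightarrow>
           measure_pmf.expectation p (beta_hat1 Y E) =
             (\<Sum>i\<in>UNIV. A i True * beta_w p E i True 0 - A i False * beta_w p E i False 0))
       \<and> ((AE Z in measure_pmf p. (\<Sum>i\<in>UNIV. ind E i True 1 Z) > 0 \<and> (\<Sum>i\<in>UNIV. ind E i False 0 Z) > 0) \<longrightarrow>
           measure_pmf.expectation p (beta_hat2 Y E) =
             (\<Sum>i\<in>UNIV. A i True * beta_w p E i True 1 - A i False * beta_w p E i False 0)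
             + (\<Sum>i\<in>UNIV. B i 1 * beta_w p E i True 1)
             + (\<Sum>i\<in>UNIV. C i 1 * beta_w p E i True 1))"
proof -
  have K_gt_1: "1 < K i" for i
    using K2[of i] by simp
  have Y_unexposed: "Y i z 0 = A i z" for i z
    using Y_form[of 0 i z] K_gt_1[of i] B0 C0 by simp
  have Y_treated_exposed: "Y i True 1 = A i True + B i 1 + C i 1" for i
    using Y_form[of 1 i True] K_gt_1[of i] by simp
  have "measure_pmf.expectation p (beta_hat1 Y E) =
      (\<Sum>i\<in>UNIV. A i True * beta_w p E i True 0 - A i False * beta_w p E i False 0)"
    unfolding beta_hat1_def expectation_cell_mean_diff Y_unexposed ..
  moreover have "measure_pmf.expectation p (beta_hat2 Y E) =
      (\<Sum>i\<in>UNIV. A i True * beta_w p E i True 1 - A i False * beta_w p E i False 0)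
      + (\<Sum>i\<in>UNIV. B i 1 * beta_w p E i True 1)
      + (\<Sum>i\<in>UNIV. C i 1 * beta_w p E i True 1)"
    unfolding beta_hat2_def expectation_cell_mean_diff Y_unexposed Y_treated_exposed
    by (simp add: sum.distrib[symmetric] algebra_simps)
  ultimately show ?thesis
    by blast
qed

end
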